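(* Let $G$ be a directed $st$-graph and let $b$ be a critical node of $G$. Then every $b$-minimal minimal vertex separator of $G$ is $b$-critical.
   Context: A directed $st$-graph $G=(V,E,s,t)$ is a finite directed graph with no self-loops and no parallel edges, with distinct source $s$ (no incoming edges) and sink $t$ (no outgoing edges), such that every vertex lies on some directed walk from $s$ to $t$. A vertex separator is a set $T\subseteq V$ meeting every $s$–$t$ walk; an mvs is an inclusion-minimal one. For $u\in V$, $A\subseteq V$: $u\sqsubseteq A$ if every directed walk from $u$ to $t$ contains a vertex of $A$; $A\sqsubseteq A'$ if $u\sqsubseteq A'$ for all $u\in A$; $A\sqsubset A'$ means $A\sqsubseteq A'$ and $A\neq A'$. An mvs $T$ is $b$-critical if $b\in T$ and there is $a\in T$ (possibly $a=b$) with a directed walk of length at least one from $a$ to $b$; $b$ is a critical node if some mvs is $b$-critical. An mvs $T$ is $b$-minimal if $b\in T$ and $b\notin T'$ for every mvs $T'$ with $T'\sqsubset T$. *)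

theory Defs
  imports Main
begin

text \<open>A directed walk is a nonempty list of vertices, consecutive ones joined by edges.
  Its length is the number of edges, i.e. length minus one.\<close>
definition is_walk :: "('a \<times> 'a) set \<Rightarrow> 'a list \<Rightarrow> bool" where
  "is_walk E xs \<longleftrightarrow> xs \<noteq> [] \<and> (\<forall>i. Suc i < length xs \<longrightarrow> (xs ! i, xs ! Suc i) \<in> E)"

definition walk_from_to :: "('a \<times> 'a) set \<Rightarrow> 'a \<Rightarrow> 'a \<Rightarrow> 'a list \<Rightarrow> bool" where
  "walk_from_to E u v xs \<longleftrightarrow> is_walk E xs \<and> hd xs = u \<and> last xs = v"

definition st_graph :: "'a set \<Rightarrow> ('a \<times> 'a) set \<Rightarrow> 'a \<Rightarrow> 'a \<Rightarrow> bool" where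
  "st_graph V E s t \<longleftrightarrow>
     finite V \<and> E \<subseteq> V \<times> V \<and> (\<forall>v. (v, v) \<notin> E) \<and>
     s \<in> V \<and> t \<in> V \<and> s \<noteq> t \<and>
     (\<forall>u. (u, s) \<notin> E) \<and> (\<forall>u. (t, u) \<notin> E) \<and>
     (\<forall>v\<in>V. \<exists>xs. walk_from_to E s t xs \<and> v \<in> set xs)"

definition vertex_separator :: "'a set \<Rightarrow> ('a \<times> 'a) set \<Rightarrow> 'a \<Rightarrow> 'a \<Rightarrow> 'a set \<Rightarrow> bool" where
  "vertex_separator V E s t T \<longleftrightarrow>
     T \<subseteq> V \<and> (\<forall>xs. walk_from_to E s t xs \<longrightarrow> set xs \<inter> T \<noteq> {})"

definition mvs :: "'a set \<Rightarrow> ('a \<times> 'a) set \<Rightarrow> 'a \<Rightarrow> 'a \<Rightarrow> 'a set \<Rightarrow> bool" where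
  "mvs V E s t T \<longleftrightarrow> vertex_separator V E s t T \<and>
     (\<forall>T'. T' \<subset> T \<longrightarrow> \<not> vertex_separator V E s t T')"

definition node_below :: "('a \<times> 'a) set \<Rightarrow> 'a \<Rightarrow> 'a \<Rightarrow> 'a set \<Rightarrow> bool" where
  "node_below E t u A \<longleftrightarrow> (\<forall>xs. walk_from_to E u t xs \<longrightarrow> set xs \<inter> A \<noteq> {})"

definition set_below :: "('a \<times> 'a) set \<Rightarrow> 'a \<Rightarrow> 'a set \<Rightarrow> 'a set \<Rightarrow> bool" where
  "set_below E t A A' \<longleftrightarrow> (\<forall>u\<in>A. node_below E t u A')"

definition set_strictly_below :: "('a \<times> 'a) set \<Rightarrow> 'a \<Rightarrow> 'a set \<Rightarrow> 'a set \<Rightarrow> bool" where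
  "set_strictly_below E t A A' \<longleftrightarrow> set_below E t A A' \<and> A \<noteq> A'"

definition b_critical :: "'a set \<Rightarrow> ('a \<times> 'a) set \<Rightarrow> 'a \<Rightarrow> 'a \<Rightarrow> 'a \<Rightarrow> 'a set \<Rightarrow> bool" where
  "b_critical V E s t b T \<longleftrightarrow> mvs V E s t T \<and> b \<in> T \<and>
     (\<exists>a\<in>T. \<exists>xs. walk_from_to E a b xs \<and> length xs \<ge> 2)"

definition critical_node :: "'a set \<Rightarrow> ('a \<times> 'a) set \<Rightarrow> 'a \<Rightarrow> 'a \<Rightarrow> 'a \<Rightarrow> bool" where
  "critical_node V E s t b \<longleftrightarrow> (\<exists>T. b_critical V E s t b T)"

definition b_minimal :: "'a set \<Rightarrow> ('a \<times> 'a) set \<Rightarrow> 'a \<Rightarrow> 'a \<Rightarrow> 'a \<Rightarrow> 'a set \<Rightarrow> bool" where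
  "b_minimal V E s t b T \<longleftrightarrow> mvs V E s t T \<and> b \<in> T \<and>
     (\<forall>T'. mvs V E s t T' \<and> set_strictly_below E t T' T \<longrightarrow> b \<notin> T')"

end

theory Submission
  imports Defs
begin

text \<open>Suppose the \<open>b\<close>-minimal separator \<open>T\<close> were not \<open>b\<close>-critical, and let \<open>T\<^sub>0\<close> be a
  \<open>b\<close>-critical mvs with \<open>a\<^sub>0 \<in> T\<^sub>0\<close> reaching \<open>b\<close>. From the separator \<open>T \<union> T\<^sub>0\<close> keep the vertices
  met first from \<open>s\<close>, and of these the ones met last before \<open>t\<close>: the result \<open>M\<close> is an mvs with
  \<open>M \<sqsubseteq> T\<close>. Since no vertex of \<open>T\<close> reaches \<open>b\<close> by a nontrivial walk, the private \<open>s\<close>-\<open>t\<close> walks of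
  \<open>T\<^sub>0\<close> through \<open>a\<^sub>0\<close> and through \<open>b\<close> avoid \<open>T\<close> before these vertices, which puts both \<open>a\<^sub>0\<close> and
  \<open>b\<close> into \<open>M\<close>. As \<open>a\<^sub>0 \<notin> T\<close>, \<open>M \<sqsubset> T\<close> and \<open>b \<in> M\<close>, contradicting \<open>b\<close>-minimality.\<close>

lemma is_walk_singleton [simp]: "is_walk E [x]"
  by (simp add: is_walk_def)

lemma is_walk_Cons_Cons [simp]:
  "is_walk E (x # y # zs) \<longleftrightarrow> (x, y) \<in> E \<and> is_walk E (y # zs)"
  unfolding is_walk_def by (auto simp: nth_Cons split: nat.splits)

lemma is_walk_append_Cons:
  "is_walk E (xs @ x # ys) \<longleftrightarrow> is_walk E (xs @ [x]) \<and> is_walk E (x # ys)"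
proof (induction xs)
  case (Cons a xs)
  then show ?case by (cases xs) auto
qed simp

lemma walk_from_to_append:
  assumes "walk_from_to E u v xs" "walk_from_to E v w ys"
  shows "walk_from_to E u w (xs @ tl ys)"
proof -
  have xs: "xs = butlast xs @ [v]" and ys: "ys = v # tl ys"
    using assms unfolding walk_from_to_def is_walk_def
    by (metis append_butlast_last_id, metis list.collapse)
  have "xs @ tl ys = butlast xs @ v # tl ys"
    using xs by (metis append.assoc append_Cons append_Nil)
  then have "is_walk E (xs @ tl ys)"
    using assms xs ys is_walk_append_Cons unfolding walk_from_to_def by metis
  moreover have "hd (xs @ tl ys) = u" "last (xs @ tl ys) = w"
    using assms xs ys unfolding walk_from_to_def
    by (metis append_is_Nil_conv hd_append2 not_Cons_self, metis last_ConsR last_append last_snoc)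
  ultimately show ?thesis unfolding walk_from_to_def by simp
qed

lemma walk_from_to_suffix:
  "walk_from_to E u v (p @ y # q) \<Longrightarrow> walk_from_to E y v (y # q)"
  using is_walk_append_Cons[of E p y q] unfolding walk_from_to_def by (cases q) auto

lemma walk_from_to_prefix:
  "walk_from_to E u v (p @ y # q) \<Longrightarrow> walk_from_to E u y (p @ [y])"
  using is_walk_append_Cons[of E p y q] unfolding walk_from_to_def by (cases p) auto

lemma mvs_iff_private_walks:
  "mvs V E s t T \<longleftrightarrow> vertex_separator V E s t T \<and>
     (\<forall>x\<in>T. \<exists>xs. walk_from_to E s t xs \<and> set xs \<inter> T \<subseteq> {x})"
proof
  assume mvs: "mvs V E s t T"
  have "\<exists>xs. walk_from_to E s t xs \<and> set xs \<inter> T \<subseteq> {x}" if "x \<in> T" for x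
  proof -
    have "\<not> vertex_separator V E s t (T - {x})"
      using mvs \<open>x \<in> T\<close> unfolding mvs_def by blast
    moreover have "T - {x} \<subseteq> V"
      using mvs unfolding mvs_def vertex_separator_def by auto
    ultimately show ?thesis unfolding vertex_separator_def by auto
  qed
  with mvs show "vertex_separator V E s t T \<and>
    (\<forall>x\<in>T. \<exists>xs. walk_from_to E s t xs \<and> set xs \<inter> T \<subseteq> {x})"
    unfolding mvs_def by blast
next
  assume private_walks: "vertex_separator V E s t T \<and>
    (\<forall>x\<in>T. \<exists>xs. walk_from_to E s t xs \<and> set xs \<inter> T \<subseteq> {x})"
  have "\<not> vertex_separator V E s t T'" if "T' \<subset> T" for T'
  proof -
    obtain x where "x \<in> T" "x \<notin> T'" using \<open>T' \<subset> T\<close> by blast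
    then obtain xs where "walk_from_to E s t xs" "set xs \<inter> T' = {}"
      using private_walks \<open>T' \<subset> T\<close> by blast
    then show ?thesis unfolding vertex_separator_def by blast
  qed
  with private_walks show "mvs V E s t T" unfolding mvs_def by blast
qed

lemma mvs_last_visit:
  assumes "mvs V E s t T" "x \<in> T"
  obtains ys zs where "walk_from_to E s t (ys @ x # zs)"
    "set ys \<inter> T \<subseteq> {x}" "set zs \<inter> T = {}"
proof -
  obtain xs where xs: "walk_from_to E s t xs" "set xs \<inter> T \<subseteq> {x}"
    using assms unfolding mvs_iff_private_walks by blast
  then have "x \<in> set xs"
    using assms unfolding mvs_def vertex_separator_def by blast
  then obtain ys zs where "xs = ys @ x # zs" "x \<notin> set zs"
    using split_list_last by metis
  with xs that show ?thesis by auto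
qed

definition first_hits :: "('a \<times> 'a) set \<Rightarrow> 'a \<Rightarrow> 'a set \<Rightarrow> 'a set" where
  "first_hits E s A = {x \<in> A. \<exists>xs. walk_from_to E s x xs \<and> set xs \<inter> A \<subseteq> {x}}"

definition last_hits :: "('a \<times> 'a) set \<Rightarrow> 'a \<Rightarrow> 'a set \<Rightarrow> 'a set" where
  "last_hits E t A = {x \<in> A. \<exists>xs. walk_from_to E x t xs \<and> set xs \<inter> A \<subseteq> {x}}"

definition separator_core :: "('a \<times> 'a) set \<Rightarrow> 'a \<Rightarrow> 'a \<Rightarrow> 'a set \<Rightarrow> 'a set" where
  "separator_core E s t A = last_hits E t (first_hits E s A)"

lemma first_hits_subset: "first_hits E s A \<subseteq> A"
  unfolding first_hits_def by blast

lemma last_hits_subset: "last_hits E t A \<subseteq> A"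
  unfolding last_hits_def by blast

lemma walk_meets_first_hits:
  assumes "walk_from_to E s v xs" "set xs \<inter> A \<noteq> {}"
  shows "set xs \<inter> first_hits E s A \<noteq> {}"
proof -
  obtain ys x zs where xs: "xs = ys @ x # zs" "x \<in> A" "\<forall>y\<in>set ys. y \<notin> A"
    using assms(2) split_list_first_prop[of xs "\<lambda>y. y \<in> A"] by blast
  then have "walk_from_to E s x (ys @ [x]) \<and> set (ys @ [x]) \<inter> A \<subseteq> {x}"
    using assms(1) walk_from_to_prefix by fastforce
  then have "x \<in> first_hits E s A" using xs(2) unfolding first_hits_def by blast
  with xs(1) show ?thesis by auto
qed

lemma walk_meets_last_hits:
  assumes "walk_from_to E u t xs" "set xs \<inter> A \<noteq> {}"
  shows "set xs \<inter> last_hits E t A \<noteq> {}"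
proof -
  obtain ys x zs where xs: "xs = ys @ x # zs" "x \<in> A" "\<forall>z\<in>set zs. z \<notin> A"
    using assms(2) split_list_last_prop[of xs "\<lambda>y. y \<in> A"] by blast
  then have "walk_from_to E x t (x # zs) \<and> set (x # zs) \<inter> A \<subseteq> {x}"
    using assms(1) walk_from_to_suffix by fastforce
  then have "x \<in> last_hits E t A" using xs(2) unfolding last_hits_def by blast
  with xs(1) show ?thesis by auto
qed

lemma mvs_separator_core:
  assumes "vertex_separator V E s t A"
  shows "mvs V E s t (separator_core E s t A)"
  unfolding mvs_iff_private_walks
proof (intro conjI ballI)
  let ?F = "first_hits E s A"
  have "separator_core E s t A \<subseteq> A"
    unfolding separator_core_def by (rule subset_trans[OF last_hits_subset first_hits_subset])
  moreover have "set xs \<inter> separator_core E s t A \<noteq> {}" if "walk_from_to E s t xs" for xs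
  proof -
    have "set xs \<inter> A \<noteq> {}" using that assms unfolding vertex_separator_def by blast
    then have "set xs \<inter> ?F \<noteq> {}" using that by (rule walk_meets_first_hits[rotated])
    then show ?thesis using that unfolding separator_core_def by (rule walk_meets_last_hits[rotated])
  qed
  ultimately show "vertex_separator V E s t (separator_core E s t A)"
    using assms unfolding vertex_separator_def by blast
  fix x assume "x \<in> separator_core E s t A"
  then obtain q where "x \<in> ?F" and q: "walk_from_to E x t q" "set q \<inter> ?F \<subseteq> {x}"
    unfolding separator_core_def last_hits_def by blast
  then obtain p where p: "walk_from_to E s x p" "set p \<inter> A \<subseteq> {x}"
    unfolding first_hits_def by blast
  have "set (p @ tl q) \<subseteq> set p \<union> set q" by (cases q) auto
  then have "set (p @ tl q) \<inter> ?F \<subseteq> {x}" using p(2) q(2) first_hits_subset[of E s A] by blast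
  then have "set (p @ tl q) \<inter> separator_core E s t A \<subseteq> {x}"
    using last_hits_subset[of E t ?F] unfolding separator_core_def by blast
  with walk_from_to_append[OF p(1) q(1)]
  show "\<exists>xs. walk_from_to E s t xs \<and> set xs \<inter> separator_core E s t A \<subseteq> {x}" by blast
qed

text \<open>A first hit \<open>x\<close> of \<open>A \<supseteq> T\<close> with \<open>x \<notin> T\<close> is reached from \<open>s\<close> avoiding \<open>T\<close>, so the
  separator \<open>T\<close> must be met after \<open>x\<close>.\<close>
lemma first_hits_below_separator:
  assumes "vertex_separator V E s t T" "T \<subseteq> A"
  shows "set_below E t (first_hits E s A) T"
  unfolding set_below_def node_below_def
proof (intro ballI allI impI)
  fix x xs assume "x \<in> first_hits E s A" and xs: "walk_from_to E x t xs"
  show "set xs \<inter> T \<noteq> {}"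
  proof (cases "x \<in> T")
    case True
    then show ?thesis using xs unfolding walk_from_to_def is_walk_def
      by (metis disjoint_iff list.set_sel(1))
  next
    case False
    obtain p where p: "walk_from_to E s x p" "set p \<inter> A \<subseteq> {x}"
      using \<open>x \<in> first_hits E s A\<close> unfolding first_hits_def by blast
    have "set (p @ tl xs) \<inter> T \<noteq> {}"
      using assms(1) walk_from_to_append[OF p(1) xs] unfolding vertex_separator_def by blast
    moreover have "set p \<inter> T = {}" using p(2) False assms(2) by blast
    ultimately show ?thesis by (cases xs) auto
  qed
qed

lemma separator_core_below:
  assumes "vertex_separator V E s t T" "T \<subseteq> A"
  shows "set_below E t (separator_core E s t A) T"
  using first_hits_below_separator[OF assms] last_hits_subset[of E t "first_hits E s A"]
  unfolding separator_core_def set_below_def by blast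

lemma first_hit_in_separator_core:
  assumes "vertex_separator V E s t T\<^sub>0" "T\<^sub>0 \<subseteq> A" "x \<in> first_hits E s A"
    and "walk_from_to E x t (x # zs)" "set zs \<inter> T\<^sub>0 = {}"
  shows "x \<in> separator_core E s t A"
proof -
  have "w \<notin> first_hits E s A" if "w \<in> set zs" for w
  proof
    assume "w \<in> first_hits E s A"
    then obtain p where p: "walk_from_to E s w p" "set p \<inter> A \<subseteq> {w}"
      unfolding first_hits_def by blast
    obtain z\<^sub>1 z\<^sub>2 where zs: "zs = z\<^sub>1 @ w # z\<^sub>2" using \<open>w \<in> set zs\<close> by (meson split_list)
    then have "walk_from_to E w t (w # z\<^sub>2)"
      using assms(4) walk_from_to_suffix[of E x t "x # z\<^sub>1"] by simp
    from walk_from_to_append[OF p(1) this] have "walk_from_to E s t (p @ z\<^sub>2)" by simp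
    then have "set (p @ z\<^sub>2) \<inter> T\<^sub>0 \<noteq> {}" using assms(1) unfolding vertex_separator_def by blast
    moreover have "w \<notin> T\<^sub>0" using \<open>w \<in> set zs\<close> assms(5) by blast
    ultimately show False using p(2) assms(2,5) zs by auto
  qed
  then have "set (x # zs) \<inter> first_hits E s A \<subseteq> {x}" by auto
  with assms(3,4) show ?thesis unfolding separator_core_def last_hits_def by blast
qed

lemma reaching_vertex_in_separator_core:
  assumes T: "vertex_separator V E s t T"
    and not_critical: "\<forall>a\<in>T. \<forall>xs. walk_from_to E a b xs \<longrightarrow> length xs < 2"
    and T\<^sub>0: "mvs V E s t T\<^sub>0" "x \<in> T\<^sub>0"
    and x_reaches_b: "walk_from_to E x b p"
  shows "x \<in> separator_core E s t (T \<union> T\<^sub>0)"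
proof -
  obtain ys zs where w: "walk_from_to E s t (ys @ x # zs)"
    and ys: "set ys \<inter> T\<^sub>0 \<subseteq> {x}" and zs: "set zs \<inter> T\<^sub>0 = {}"
    using mvs_last_visit[OF T\<^sub>0] by blast
  have "y \<notin> T" if "y \<in> set ys" for y
  proof
    assume "y \<in> T"
    obtain y\<^sub>1 y\<^sub>2 where "ys = y\<^sub>1 @ y # y\<^sub>2" using \<open>y \<in> set ys\<close> by (meson split_list)
    with w have "walk_from_to E y t ((y # y\<^sub>2) @ x # zs)"
      using walk_from_to_suffix[of E s t y\<^sub>1 y "y\<^sub>2 @ x # zs"] by simp
    then have "walk_from_to E y x (y # y\<^sub>2 @ [x])"
      using walk_from_to_prefix[of E y t "y # y\<^sub>2" x zs] by simp
    from walk_from_to_append[OF this x_reaches_b]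
    have "length ((y # y\<^sub>2 @ [x]) @ tl p) < 2" using not_critical \<open>y \<in> T\<close> by blast
    then show False by simp
  qed
  with ys have "set (ys @ [x]) \<inter> (T \<union> T\<^sub>0) \<subseteq> {x}" by auto
  with walk_from_to_prefix[OF w] T\<^sub>0(2) have "x \<in> first_hits E s (T \<union> T\<^sub>0)"
    unfolding first_hits_def by blast
  moreover have "vertex_separator V E s t T\<^sub>0" using T\<^sub>0(1) unfolding mvs_def by blast
  ultimately show ?thesis
    using first_hit_in_separator_core[of V E s t T\<^sub>0 "T \<union> T\<^sub>0" x zs] walk_from_to_suffix[OF w] zs
    by blast
qed

theorem theorem3:
  assumes "st_graph V E s t"
    and "critical_node V E s t b"
    and "b_minimal V E s t b T"
  shows "b_critical V E s t b T"
proof (rule ccontr)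
  assume "\<not> b_critical V E s t b T"
  moreover have T: "mvs V E s t T" "b \<in> T" using assms(3) unfolding b_minimal_def by blast+
  ultimately have not_critical: "\<forall>a\<in>T. \<forall>xs. walk_from_to E a b xs \<longrightarrow> length xs < 2"
    unfolding b_critical_def by (meson not_less)
  obtain T\<^sub>0 a\<^sub>0 xs\<^sub>0 where T\<^sub>0: "mvs V E s t T\<^sub>0" "b \<in> T\<^sub>0" "a\<^sub>0 \<in> T\<^sub>0"
    and a\<^sub>0: "walk_from_to E a\<^sub>0 b xs\<^sub>0" "length xs\<^sub>0 \<ge> 2"
    using assms(2) unfolding critical_node_def b_critical_def by blast
  define M where "M = separator_core E s t (T \<union> T\<^sub>0)"
  have sep: "vertex_separator V E s t T" "vertex_separator V E s t (T \<union> T\<^sub>0)"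
    using T(1) T\<^sub>0(1) unfolding mvs_def vertex_separator_def by auto
  note in_M = reaching_vertex_in_separator_core[OF sep(1) not_critical T\<^sub>0(1), folded M_def]
  have "walk_from_to E b b [b]" unfolding walk_from_to_def by simp
  then have "b \<in> M" using in_M T\<^sub>0(2) by blast
  have "a\<^sub>0 \<in> M" using in_M T\<^sub>0(3) a\<^sub>0(1) by blast
  moreover have "a\<^sub>0 \<notin> T" using not_critical a\<^sub>0 by force
  ultimately have "set_strictly_below E t M T"
    using separator_core_below[OF sep(1)] unfolding set_strictly_below_def M_def by blast
  moreover have "mvs V E s t M" unfolding M_def by (rule mvs_separator_core[OF sep(2)])
  ultimately show False using assms(3) \<open>b \<in> M\<close> unfolding b_minimal_def by blast
qed

end
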